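(* For any subset $A\subset E$ and any edge $k\in E$, (i) $D_kB_A^c=\sqrt{pq}\,\mathbf 1\{k\in A\}\,B_{A\setminus\{k\}}$; (ii) $-D_kL^{-1}B_A^c=\sqrt{pq}\,\mathbf 1\{k\in A\}\sum_{\{k\}\subset\alpha\subset A}\dfrac{p^{|A|-|\alpha|}}{|A|\binom{|A|-1}{|\alpha|-1}}B_{\alpha\setminus\{k\}}$. In particular, all these expressions are non-negative.
   Context: $E$ is the (finite) set of all $\binom n2$ possible edges on $n$ vertices, $p\in(0,1)$, $q=1-p$. $(X_k)_{k\in E}$ are independent Rademacher variables with $\mathbb{P}(X_k=1)=p$. $B_k=\frac12(X_k+1)$, $Y_k=(pq)^{-1/2}(B_k-p)$; for $A\subset E$, $B_A=\prod_{k\in A}B_k$, $Y_A=\prod_{k\in A}Y_k$ ($B_\emptyset=Y_\emptyset=1$), and $Z^c:=Z-\mathbb{E}[Z]$. The discrete gradient is $D_kF=\sqrt{pq}(F_k^+-F_k^-)$, where $F_k^\pm$ is $F$ with $X_k$ set to $\pm1$. Every functional $F$ of $(X_k)$ can be written $F=\mathbb{E}F+\sum_{\emptyset\ne\alpha\subset E}c_\alpha Y_\alpha$, and the pseudo-inverse Ornstein–Uhlenbeck operator is $L^{-1}F=-\sum_{\emptyset\neq\alpha\subset E}\frac{c_\alpha}{|\alpha|}Y_\alpha$. *)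

theory Defs
  imports Complex_Main
begin

text \<open>A configuration
  of the Rademacher family (X_k) is encoded by the set S \<subseteq> E of edges k
  with X_k = 1.  A functional F of (X_k) is a map on configurations
  (only its values on subsets of E are relevant).\<close>

definition edges :: "nat \<Rightarrow> nat set set" where
  "edges n = {e. e \<subseteq> {..<n} \<and> card e = 2}"

type_synonym functional = "nat set set \<Rightarrow> real"

definition Xv :: "nat set \<Rightarrow> functional" where
  "Xv k S = (if k \<in> S then 1 else -1)"

definition Bk :: "nat set \<Rightarrow> functional" where
  "Bk k S = (Xv k S + 1) / 2"

definition Yk :: "real \<Rightarrow> nat set \<Rightarrow> functional" where
  "Yk p k S = (Bk k S - p) / sqrt (p * (1 - p))"

definition BA :: "nat set set \<Rightarrow> functional" where
  "BA A S = (\<Prod>k\<in>A. Bk k S)"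

definition YA :: "real \<Rightarrow> nat set set \<Rightarrow> functional" where
  "YA p A S = (\<Prod>k\<in>A. Yk p k S)"

definition weight :: "nat \<Rightarrow> real \<Rightarrow> nat set set \<Rightarrow> real" where
  "weight n p S = (\<Prod>k\<in>edges n. if k \<in> S then p else 1 - p)"

definition expect :: "nat \<Rightarrow> real \<Rightarrow> functional \<Rightarrow> real" where
  "expect n p F = (\<Sum>S\<in>Pow (edges n). weight n p S * F S)"

definition centered :: "nat \<Rightarrow> real \<Rightarrow> functional \<Rightarrow> functional" where
  "centered n p F S = F S - expect n p F"

text \<open>Discrete gradient: F_k^+ sets X_k = 1, F_k^- sets X_k = -1.\<close>
definition Dgrad :: "real \<Rightarrow> nat set \<Rightarrow> functional \<Rightarrow> functional" where
  "Dgrad p k F S = sqrt (p * (1 - p)) * (F (insert k S) - F (S - {k}))"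

text \<open>Chaos (Walsh) coefficient c_alpha of F in F = E F + sum c_alpha Y_alpha;
  since (Y_alpha) is orthonormal in L^2, c_alpha = E[F Y_alpha].\<close>
definition chaos_coeff :: "nat \<Rightarrow> real \<Rightarrow> functional \<Rightarrow> nat set set \<Rightarrow> real" where
  "chaos_coeff n p F \<alpha> = expect n p (\<lambda>S. F S * YA p \<alpha> S)"

definition Linv :: "nat \<Rightarrow> real \<Rightarrow> functional \<Rightarrow> functional" where
  "Linv n p F S = - (\<Sum>\<alpha>\<in>Pow (edges n) - {{}}. chaos_coeff n p F \<alpha> / real (card \<alpha>) * YA p \<alpha> S)"

end

theory Submission
  imports Defs
begin

text \<open>Write s = sqrt (p q). The Walsh expansion
  B_A = \<Prod>(s Y_j + p) = \<Sum>_{a \<subseteq> A} p^(|A|-|a|) s^|a| Y_a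
  displays the chaos coefficients of B_A^c, by orthonormality of the Y_a, so L^-1 divides the
  a-th term by -|a|. On a product of one-coordinate factors D_k only differentiates the k-th
  factor, which gives (i) and D_k Y_a = 1{k \<in> a} Y_(a-{k}). Hence -D_k L^-1 B_A^c is
  s \<Sum>_{k \<in> b \<subseteq> A} p^(|A|-|b|)/|b| \<Prod>_{j \<in> b-{k}} (B_j - p); expanding the products, the
  coefficient of B_(\<alpha>-{k}) is an alternating sum over the sets between \<alpha> and A, which is a
  discrete Beta integral and equals 1/(|A| binom(|A|-1, |\<alpha>|-1)).\<close>

lemma sum_Pow_insert:
  assumes "finite B" "b \<notin> B"
  shows "(\<Sum>e\<in>Pow (insert b B). f e) = (\<Sum>e\<in>Pow B. f e) + (\<Sum>e\<in>Pow B. f (insert b e))"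
proof -
  have "inj_on (insert b) (Pow B)"
    using assms(2) by (auto simp: inj_on_def)
  moreover have "Pow B \<inter> insert b ` Pow B = {}"
    using assms(2) by auto
  ultimately show ?thesis
    unfolding Pow_insert using assms(1) by (simp add: sum.union_disjoint sum.reindex)
qed

lemma fact_beta_recurrence:
  "fact g * fact r / fact (g + r + 1) - fact (Suc g) * fact r / fact (Suc g + r + 1)
     = (fact g * fact (Suc r) / fact (g + Suc r + 1) :: real)"
proof -
  have "Suc g + r + 1 = Suc (g + r + 1)" "g + Suc r + 1 = Suc (g + r + 1)" by simp_all
  moreover have "(fact (Suc m) :: real) = real (Suc m) * fact m" for m
    by (rule fact_Suc)
  moreover have "x * y / N - real (Suc g) * x * y / (real (Suc (g + r + 1)) * N)
                 = x * (real (Suc r) * y) / (real (Suc (g + r + 1)) * N)" if "N > 0" for x y N :: real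
    using that by (simp add: divide_simps) (simp add: algebra_simps)
  ultimately show ?thesis by simp
qed

text \<open>The left-hand side is the integral of t^g (1 - t)^|B| over [0, 1], expanded by the
  binomial theorem; the right-hand side is the Beta function B(g + 1, |B| + 1).\<close>

lemma sum_Pow_alternating_div:
  assumes "finite B"
  shows "(\<Sum>e\<in>Pow B. (-1) ^ card e / real (g + card e + 1))
       = fact g * fact (card B) / fact (g + card B + 1)"
  using assms
proof (induction B arbitrary: g rule: finite_induct)
  case empty
  have "(fact g :: real) * (1 + g) > 0" by (simp add: add_pos_nonneg)
  then show ?case by (simp add: field_simps)
next
  case (insert b B)
  have shift: "(\<Sum>e\<in>Pow B. (-1) ^ card (insert b e) / real (g + card (insert b e) + 1))
      = - (\<Sum>e\<in>Pow B. (-1) ^ card e / real (Suc g + card e + 1))"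
    unfolding sum_negf[symmetric]
  proof (rule sum.cong[OF refl])
    fix e assume "e \<in> Pow B"
    then have "card (insert b e) = Suc (card e)"
      using insert.hyps finite_subset by (metis PowD card_insert_disjoint subsetD)
    then show "(-1) ^ card (insert b e) / real (g + card (insert b e) + 1)
             = - ((-1) ^ card e / real (Suc g + card e + 1))"
      by simp
  qed
  have "(\<Sum>e\<in>Pow (insert b B). (-1) ^ card e / real (g + card e + 1))
      = fact g * fact (card B) / fact (g + card B + 1)
        - fact (Suc g) * fact (card B) / fact (Suc g + card B + 1)"
    unfolding sum_Pow_insert[OF insert.hyps] shift insert.IH by simp
  also have "\<dots> = fact g * fact (Suc (card B)) / fact (g + Suc (card B) + 1)"
    by (rule fact_beta_recurrence)
  finally show ?case
    using insert.hyps by simp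
qed

lemma fact_beta_eq_inverse_binomial:
  assumes "k \<le> m"
  shows "fact k * fact (m - k) / fact (m + 1) = (1 / (real (m + 1) * real (m choose k)) :: real)"
proof -
  have "real (m choose k) = fact m / (fact k * fact (m - k))"
    by (rule binomial_fact[OF assms])
  then have "fact m = fact k * fact (m - k) * real (m choose k)"
    by (simp add: field_simps)
  moreover have "(fact (m + 1) :: real) = real (m + 1) * fact m"
    by simp
  ultimately show ?thesis
    by simp
qed

lemma sum_supsets_alternating_div:
  assumes "finite A" "d \<subseteq> A"
  shows "(\<Sum>c\<in>{c. c \<in> Pow A \<and> d \<subseteq> c}. (-1) ^ (card c - card d) / real (card c + 1))
       = 1 / (real (card A + 1) * real (card A choose card d))"
proof -
  have fin: "finite d" "finite (A - d)"
    using assms finite_subset by auto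
  have "{c. c \<in> Pow A \<and> d \<subseteq> c} = (\<lambda>e. d \<union> e) ` Pow (A - d)"
  proof (intro equalityI subsetI)
    fix c assume "c \<in> {c. c \<in> Pow A \<and> d \<subseteq> c}"
    then have "c = d \<union> (c - d)" "c - d \<in> Pow (A - d)" by auto
    then show "c \<in> (\<lambda>e. d \<union> e) ` Pow (A - d)" by blast
  qed (use assms(2) in auto)
  moreover have "inj_on (\<lambda>e. d \<union> e) (Pow (A - d))"
    by (auto simp: inj_on_def)
  ultimately have "(\<Sum>c\<in>{c. c \<in> Pow A \<and> d \<subseteq> c}. (-1) ^ (card c - card d) / real (card c + 1))
      = (\<Sum>e\<in>Pow (A - d). (-1) ^ (card (d \<union> e) - card d) / real (card (d \<union> e) + 1))"
    by (simp add: sum.reindex)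
  also have "\<dots> = (\<Sum>e\<in>Pow (A - d). (-1) ^ card e / real (card d + card e + 1))"
  proof (rule sum.cong[OF refl])
    fix e assume "e \<in> Pow (A - d)"
    then have "card (d \<union> e) = card d + card e"
      using fin by (intro card_Un_disjoint) (auto intro: finite_subset)
    then show "(-1) ^ (card (d \<union> e) - card d) / real (card (d \<union> e) + 1)
             = (-1) ^ card e / real (card d + card e + 1)"
      by simp
  qed
  also have "\<dots> = fact (card d) * fact (card A - card d) / fact (card A + 1)"
    using sum_Pow_alternating_div[OF fin(2), of "card d"] assms
    by (simp add: card_Diff_subset fin(1) card_mono)
  also have "\<dots> = 1 / (real (card A + 1) * real (card A choose card d))"
    using assms by (intro fact_beta_eq_inverse_binomial card_mono)
  finally show ?thesis .
qed

lemma sum_Pow_shifted_prod: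
  fixes x :: "'a \<Rightarrow> real"
  assumes "finite A"
  shows "(\<Sum>c\<in>Pow A. p ^ (card A - card c) / real (card c + 1) * (\<Prod>j\<in>c. x j - p))
       = (\<Sum>d\<in>Pow A. p ^ (card A - card d) / (real (card A + 1) * real (card A choose card d))
                       * (\<Prod>j\<in>d. x j))"
proof -
  define m where "m = card A"
  define w where "w c d = (-1) ^ (card c - card d) / real (card c + 1)" for c d :: "'a set"
  have expand: "p ^ (m - card c) / real (card c + 1) * (\<Prod>j\<in>c. x j - p)
      = (\<Sum>d\<in>{d \<in> Pow A. d \<subseteq> c}. w c d * (p ^ (m - card d) * (\<Prod>j\<in>d. x j)))"
    if c: "c \<in> Pow A" for c
  proof -
    have fc: "finite c" "card c \<le> m"
      using c assms finite_subset card_mono unfolding m_def by auto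
    have "p ^ (m - card c) * ((-1) ^ (card c - card d) * (\<Prod>j\<in>d. x j) * (\<Prod>j\<in>c - d. p))
        = (-1) ^ (card c - card d) * (p ^ (m - card d) * (\<Prod>j\<in>d. x j))" if "d \<subseteq> c" for d
    proof -
      have "card d \<le> card c" "card (c - d) = card c - card d"
        using that fc(1) by (auto intro: card_mono card_Diff_subset finite_subset)
      then have "p ^ (m - card c) * (\<Prod>j\<in>c - d. p) = p ^ (m - card d)"
        using fc(2) by (simp add: power_add[symmetric])
      then show ?thesis by (simp add: algebra_simps)
    qed
    moreover have "{d \<in> Pow A. d \<subseteq> c} = Pow c"
      using c by auto
    ultimately show ?thesis
      unfolding prod_diff_conv_sum'[OF fc(1)] w_def sum_distrib_left
      by (intro sum.cong) (auto simp: field_simps)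
  qed
  have "(\<Sum>c\<in>Pow A. p ^ (m - card c) / real (card c + 1) * (\<Prod>j\<in>c. x j - p))
      = (\<Sum>c\<in>Pow A. \<Sum>d\<in>{d \<in> Pow A. d \<subseteq> c}. w c d * (p ^ (m - card d) * (\<Prod>j\<in>d. x j)))"
    using expand by (rule sum.cong[OF refl])
  also have "\<dots> = (\<Sum>d\<in>Pow A. (\<Sum>c\<in>{c \<in> Pow A. d \<subseteq> c}. w c d) * (p ^ (m - card d) * (\<Prod>j\<in>d. x j)))"
    unfolding sum_distrib_right using assms by (intro sum.swap_restrict) auto
  also have "\<dots> = (\<Sum>d\<in>Pow A. p ^ (m - card d) / (real (m + 1) * real (m choose card d)) * (\<Prod>j\<in>d. x j))"
    using sum_supsets_alternating_div[OF assms] unfolding w_def m_def by (intro sum.cong) auto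
  finally show ?thesis
    unfolding m_def .
qed

lemma sum_subsets_containing:
  assumes "k \<in> A"
  shows "(\<Sum>b\<in>{b. k \<in> b \<and> b \<subseteq> A}. f b) = (\<Sum>c\<in>Pow (A - {k}). f (insert k c))"
proof -
  have "{b. k \<in> b \<and> b \<subseteq> A} = insert k ` Pow (A - {k})"
  proof (intro equalityI subsetI)
    fix b assume "b \<in> {b. k \<in> b \<and> b \<subseteq> A}"
    then have "b = insert k (b - {k})" "b - {k} \<in> Pow (A - {k})" by auto
    then show "b \<in> insert k ` Pow (A - {k})" by blast
  qed (use assms in auto)
  moreover have "inj_on (insert k) (Pow (A - {k}))"
    by (auto simp: inj_on_def)
  ultimately show ?thesis
    by (simp add: sum.reindex)
qed

lemma sum_containing_shifted_prod:
  fixes x :: "'a \<Rightarrow> real"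
  assumes "finite A" "k \<in> A"
  shows "(\<Sum>b\<in>{b. k \<in> b \<and> b \<subseteq> A}. p ^ (card A - card b) / card b * (\<Prod>j\<in>b - {k}. x j - p))
       = (\<Sum>b\<in>{b. k \<in> b \<and> b \<subseteq> A}.
            p ^ (card A - card b) / (real (card A) * real ((card A - 1) choose (card b - 1)))
            * (\<Prod>j\<in>b - {k}. x j))"
proof -
  have cardA: "card A = card (A - {k}) + 1"
    using card_Suc_Diff1[OF assms] by simp
  have insert_c: "card (insert k c) = card c + 1" "insert k c - {k} = c" "c - {k} = c"
    if "c \<subseteq> A - {k}" for c
  proof -
    have "finite c" "k \<notin> c"
      using that assms(1) finite_subset by auto
    then show "card (insert k c) = card c + 1" "insert k c - {k} = c" "c - {k} = c"
      by auto
  qed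
  have "(\<Sum>b\<in>{b. k \<in> b \<and> b \<subseteq> A}. p ^ (card A - card b) / card b * (\<Prod>j\<in>b - {k}. x j - p))
      = (\<Sum>c\<in>Pow (A - {k}). p ^ (card (A - {k}) - card c) / real (card c + 1) * (\<Prod>j\<in>c. x j - p))"
    unfolding sum_subsets_containing[OF assms(2)] by (intro sum.cong refl) (simp add: insert_c cardA)
  also have "\<dots> = (\<Sum>c\<in>Pow (A - {k}). p ^ (card (A - {k}) - card c)
                      / (real (card (A - {k}) + 1) * real (card (A - {k}) choose card c)) * (\<Prod>j\<in>c. x j))"
    using assms(1) by (intro sum_Pow_shifted_prod) simp
  also have "\<dots> = (\<Sum>b\<in>{b. k \<in> b \<and> b \<subseteq> A}.
            p ^ (card A - card b) / (real (card A) * real ((card A - 1) choose (card b - 1)))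
            * (\<Prod>j\<in>b - {k}. x j))"
    unfolding sum_subsets_containing[OF assms(2)] by (intro sum.cong refl) (simp add: insert_c cardA)
  finally show ?thesis .
qed

lemma finite_edges: "finite (edges n)"
  unfolding edges_def by (rule finite_subset[of _ "Pow {..<n}"]) auto

lemma sum_Pow_prod_membership:
  fixes h :: "'a \<Rightarrow> bool \<Rightarrow> 'b::comm_semiring_1"
  assumes "finite E"
  shows "(\<Sum>S\<in>Pow E. \<Prod>k\<in>E. h k (k \<in> S)) = (\<Prod>k\<in>E. h k True + h k False)"
proof -
  have "(\<Prod>k\<in>E. h k (k \<in> S)) = (\<Prod>k\<in>S. h k True) * (\<Prod>k\<in>E - S. h k False)"
    if "S \<subseteq> E" for S
  proof -
    have "(\<Prod>k\<in>E. h k (k \<in> S)) = (\<Prod>k\<in>E - S. h k (k \<in> S)) * (\<Prod>k\<in>S. h k (k \<in> S))"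
      by (rule prod.subset_diff[OF that assms])
    also have "\<dots> = (\<Prod>k\<in>E - S. h k False) * (\<Prod>k\<in>S. h k True)"
      by (intro arg_cong2[where f = "(*)"] prod.cong) auto
    finally show ?thesis by (simp only: mult.commute)
  qed
  then show ?thesis by (simp add: prod_add[OF assms])
qed

lemma expect_prod_independent:
  "expect n p (\<lambda>S. \<Prod>k\<in>edges n. g k (k \<in> S))
     = (\<Prod>k\<in>edges n. p * g k True + (1 - p) * g k False)"
proof -
  have "expect n p (\<lambda>S. \<Prod>k\<in>edges n. g k (k \<in> S))
      = (\<Sum>S\<in>Pow (edges n). \<Prod>k\<in>edges n. (if k \<in> S then p else 1 - p) * g k (k \<in> S))"
    unfolding expect_def weight_def by (simp add: prod.distrib)
  also have "\<dots> = (\<Prod>k\<in>edges n. p * g k True + (1 - p) * g k False)"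
    using sum_Pow_prod_membership[OF finite_edges, of "\<lambda>k b. (if b then p else 1 - p) * g k b"]
    by simp
  finally show ?thesis .
qed

lemma expect_sum: "finite I \<Longrightarrow> expect n p (\<lambda>S. \<Sum>i\<in>I. F i S) = (\<Sum>i\<in>I. expect n p (F i))"
  unfolding expect_def by (simp add: sum_distrib_left sum.swap[of _ I])

lemma expect_cmult: "expect n p (\<lambda>S. c * F S) = c * expect n p F"
  unfolding expect_def by (simp add: sum_distrib_left mult_ac)

lemma expect_diff: "expect n p (\<lambda>S. F S - G S) = expect n p F - expect n p G"
  unfolding expect_def by (simp add: sum_subtractf right_diff_distrib)

lemma Bk_eq: "Bk k S = (if k \<in> S then 1 else 0)"
  unfolding Bk_def Xv_def by auto

lemma BA_nonneg: "0 \<le> BA A S"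
  unfolding BA_def Bk_eq by (rule prod_nonneg) simp

lemma Yk_eq: "Yk p k S = (if k \<in> S then 1 - p else - p) / sqrt (p * (1 - p))"
  unfolding Yk_def Bk_def Xv_def by auto

lemma sqrt_pq_power_mult_YA:
  assumes "0 < p" "p < 1"
  shows "sqrt (p * (1 - p)) ^ card a * YA p a S = (\<Prod>j\<in>a. Bk j S - p)"
proof (cases "finite a")
  case True
  have "(\<Prod>j\<in>a. Bk j S - p) = (\<Prod>j\<in>a. sqrt (p * (1 - p)) * Yk p j S)"
    unfolding Yk_def using assms by simp
  then show ?thesis
    unfolding YA_def by (simp add: prod.distrib True)
qed (simp add: YA_def)

lemma YA_orthonormal:
  assumes p: "0 < p" "p < 1" and "a \<subseteq> edges n" "b \<subseteq> edges n"
  shows "expect n p (\<lambda>S. YA p a S * YA p b S) = (if a = b then 1 else 0)"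
proof -
  define s where "s = sqrt (p * (1 - p))"
  have s: "s > 0" "s * s = p * (1 - p)" unfolding s_def using p by simp_all
  define y where "y x = (if x then 1 - p else - p) / s" for x
  define g where "g k x = (if k \<in> a then y x else 1) * (if k \<in> b then y x else 1)" for k x
  have YA_eq: "YA p c S = (\<Prod>k\<in>edges n. if k \<in> c then y (k \<in> S) else 1)"
    if "c \<subseteq> edges n" for c S
    unfolding YA_def Yk_eq y_def s_def prod.inter_restrict[OF finite_edges, symmetric]
    using that by (simp add: Int_absorb1 Int_absorb2)
  have "expect n p (\<lambda>S. YA p a S * YA p b S) = expect n p (\<lambda>S. \<Prod>k\<in>edges n. g k (k \<in> S))"
    unfolding YA_eq[OF assms(3)] YA_eq[OF assms(4)] g_def by (simp add: prod.distrib)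
  also have "\<dots> = (\<Prod>k\<in>edges n. if (k \<in> a) = (k \<in> b) then 1 else 0)"
  proof -
    have mean: "p * y True + (1 - p) * y False = 0"
      unfolding y_def by (simp add: field_simps)
    have var: "p * (y True * y True) + (1 - p) * (y False * y False) = 1"
      unfolding y_def using s p by (simp add: field_simps)
    show ?thesis
      unfolding expect_prod_independent using mean var by (intro prod.cong) (auto simp: g_def)
  qed
  also have "\<dots> = (if a = b then 1 else 0)"
  proof (cases "a = b")
    case False
    then obtain k where k: "(k \<in> a) \<noteq> (k \<in> b)" by blast
    with assms have "k \<in> edges n" by auto
    with k False show ?thesis using finite_edges by (auto intro: prod_zero)
  qed simp
  finally show ?thesis .
qed

lemma BA_walsh_expansion:
  assumes p: "0 < p" "p < 1" and "finite A"
  shows "BA A S = (\<Sum>a\<in>Pow A. p ^ (card A - card a) * sqrt (p * (1 - p)) ^ card a * YA p a S)"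
proof -
  have "BA A S = (\<Prod>k\<in>A. sqrt (p * (1 - p)) * Yk p k S + p)"
    unfolding BA_def Yk_def using p by simp
  also have "\<dots> = (\<Sum>a\<in>Pow A. p ^ (card A - card a) * sqrt (p * (1 - p)) ^ card a * YA p a S)"
    unfolding prod_add[OF assms(3)] YA_def
    by (intro sum.cong) (auto simp: prod.distrib card_Diff_subset finite_subset[OF _ assms(3)])
  finally show ?thesis .
qed

lemma expect_YA_eq_0:
  assumes "0 < p" "p < 1" "b \<subseteq> edges n" "b \<noteq> {}"
  shows "expect n p (YA p b) = 0"
  using YA_orthonormal[OF assms(1,2) empty_subsetI assms(3)] assms(4)
  by (simp add: YA_def[of p "{}"])

lemma chaos_coeff_centered_BA:
  assumes p: "0 < p" "p < 1" and A: "A \<subseteq> edges n" and b: "b \<subseteq> edges n" "b \<noteq> {}"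
  shows "chaos_coeff n p (centered n p (BA A)) b
       = (if b \<subseteq> A then p ^ (card A - card b) * sqrt (p * (1 - p)) ^ card b else 0)"
proof -
  have finA: "finite A" using A finite_edges finite_subset by auto
  have "chaos_coeff n p (centered n p (BA A)) b
      = expect n p (\<lambda>S. BA A S * YA p b S) - expect n p (BA A) * expect n p (YA p b)"
    unfolding chaos_coeff_def centered_def left_diff_distrib expect_diff expect_cmult ..
  also have "\<dots> = (\<Sum>a\<in>Pow A. p ^ (card A - card a) * sqrt (p * (1 - p)) ^ card a
                                * expect n p (\<lambda>S. YA p a S * YA p b S))"
    unfolding expect_YA_eq_0[OF p b] BA_walsh_expansion[OF p finA] sum_distrib_right
    by (simp add: expect_sum[OF finite_Pow_iff[THEN iffD2, OF finA]] expect_cmult mult.assoc)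
  also have "\<dots> = (\<Sum>a\<in>Pow A. if a = b then p ^ (card A - card a) * sqrt (p * (1 - p)) ^ card a else 0)"
    using YA_orthonormal[OF p _ b(1)] A by (intro sum.cong) auto
  also have "\<dots> = (if b \<subseteq> A then p ^ (card A - card b) * sqrt (p * (1 - p)) ^ card b else 0)"
    by (simp add: finA sum.delta')
  finally show ?thesis .
qed

lemma Linv_centered_BA:
  assumes p: "0 < p" "p < 1" and A: "A \<subseteq> edges n"
  shows "Linv n p (centered n p (BA A)) S
     = - (\<Sum>b\<in>Pow A - {{}}. p ^ (card A - card b) * sqrt (p * (1 - p)) ^ card b / card b * YA p b S)"
proof -
  define f where "f b = p ^ (card A - card b) * sqrt (p * (1 - p)) ^ card b / card b * YA p b S" for b
  have "(\<Sum>b\<in>Pow (edges n) - {{}}. chaos_coeff n p (centered n p (BA A)) b / card b * YA p b S)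
      = (\<Sum>b\<in>Pow (edges n) - {{}}. if b \<subseteq> A then f b else 0)"
    using chaos_coeff_centered_BA[OF p A] unfolding f_def by (intro sum.cong) auto
  also have "\<dots> = (\<Sum>b\<in>{b \<in> Pow (edges n) - {{}}. b \<subseteq> A}. f b)"
    by (rule sum.inter_filter[symmetric]) (simp add: finite_edges)
  also have "{b \<in> Pow (edges n) - {{}}. b \<subseteq> A} = Pow A - {{}}"
    using A by auto
  finally show ?thesis
    unfolding Linv_def f_def by simp
qed

lemma Dgrad_centered: "Dgrad p k (centered n p F) S = Dgrad p k F S"
  unfolding Dgrad_def centered_def by simp

lemma Dgrad_uminus: "Dgrad p k (\<lambda>T. - F T) S = - Dgrad p k F S"
  unfolding Dgrad_def by (simp add: algebra_simps)

lemma Dgrad_linear_combination: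
  "Dgrad p k (\<lambda>T. \<Sum>i\<in>I. c i * F i T) S = (\<Sum>i\<in>I. c i * Dgrad p k (F i) S)"
  unfolding Dgrad_def by (simp add: sum_subtractf sum_distrib_left algebra_simps)

lemma Dgrad_prod_coordinates:
  fixes f :: "nat set \<Rightarrow> bool \<Rightarrow> real"
  assumes "finite a"
  shows "Dgrad p k (\<lambda>T. \<Prod>j\<in>a. f j (j \<in> T)) S
       = (if k \<in> a then sqrt (p * (1 - p)) * (f k True - f k False) * (\<Prod>j\<in>a - {k}. f j (j \<in> S))
          else 0)"
proof (cases "k \<in> a")
  case True
  have rest: "(\<Prod>j\<in>a - {k}. f j (j \<in> T)) = (\<Prod>j\<in>a - {k}. f j (j \<in> S))"
    if "T - {k} = S - {k}" for T
  proof (rule prod.cong[OF refl])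
    fix j assume "j \<in> a - {k}"
    then have "j \<in> T \<longleftrightarrow> j \<in> S" using that by blast
    then show "f j (j \<in> T) = f j (j \<in> S)" by simp
  qed
  have split: "(\<Prod>j\<in>a. f j (j \<in> T)) = f k (k \<in> T) * (\<Prod>j\<in>a - {k}. f j (j \<in> T))" for T
    by (rule prod.remove[OF assms True])
  show ?thesis
    unfolding Dgrad_def split using rest[of "insert k S"] rest[of "S - {k}"] True
    by (simp add: algebra_simps)
next
  case False
  have "(\<Prod>j\<in>a. f j (j \<in> insert k S)) = (\<Prod>j\<in>a. f j (j \<in> S - {k}))"
  proof (rule prod.cong[OF refl])
    fix j assume "j \<in> a"
    then have "j \<noteq> k" using False by blast
    then show "f j (j \<in> insert k S) = f j (j \<in> S - {k})" by simp
  qed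
  then show ?thesis
    unfolding Dgrad_def using False by simp
qed

lemma Dgrad_BA:
  assumes "finite A"
  shows "Dgrad p k (BA A) S = sqrt (p * (1 - p)) * (if k \<in> A then 1 else 0) * BA (A - {k}) S"
  using Dgrad_prod_coordinates[OF assms, of p k "\<lambda>j x. if x then 1 else 0" S]
  unfolding BA_def Bk_eq by simp

lemma Dgrad_YA:
  assumes "0 < p" "p < 1" "finite b"
  shows "Dgrad p k (YA p b) S = (if k \<in> b then YA p (b - {k}) S else 0)"
  using Dgrad_prod_coordinates[OF assms(3), of p k "\<lambda>j x. (if x then 1 - p else - p) / sqrt (p * (1 - p))" S]
    assms(1,2)
  unfolding YA_def Yk_eq by (simp add: diff_divide_distrib[symmetric] add_divide_distrib[symmetric])

lemma neg_Dgrad_Linv_centered_BA: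
  assumes p: "0 < p" "p < 1" and A: "A \<subseteq> edges n"
  shows "- Dgrad p k (Linv n p (centered n p (BA A))) S
       = sqrt (p * (1 - p)) * (\<Sum>b\<in>{b. k \<in> b \<and> b \<subseteq> A}.
                                  p ^ (card A - card b) / card b * (\<Prod>j\<in>b - {k}. Bk j S - p))"
proof -
  define c :: "nat set set \<Rightarrow> real"
    where "c b = p ^ (card A - card b) * sqrt (p * (1 - p)) ^ card b / card b" for b
  have finA: "finite A" using A finite_edges finite_subset by auto
  have "Linv n p (centered n p (BA A)) = (\<lambda>T. - (\<Sum>b\<in>Pow A - {{}}. c b * YA p b T))"
    unfolding c_def using Linv_centered_BA[OF p A] by auto
  then have "- Dgrad p k (Linv n p (centered n p (BA A))) S
      = (\<Sum>b\<in>Pow A - {{}}. c b * Dgrad p k (YA p b) S)"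
    by (simp add: Dgrad_uminus Dgrad_linear_combination)
  also have "\<dots> = (\<Sum>b\<in>Pow A - {{}}. if k \<in> b then c b * YA p (b - {k}) S else 0)"
    using Dgrad_YA[OF p finite_subset[OF _ finA]] by (intro sum.cong) auto
  also have "\<dots> = (\<Sum>b\<in>{b. k \<in> b \<and> b \<subseteq> A}. c b * YA p (b - {k}) S)"
  proof -
    have "{b \<in> Pow A - {{}}. k \<in> b} = {b. k \<in> b \<and> b \<subseteq> A}" by auto
    then show ?thesis
      using sum.inter_filter[of "Pow A - {{}}" "\<lambda>b. c b * YA p (b - {k}) S" "\<lambda>b. k \<in> b"] finA
      by simp
  qed
  also have "\<dots> = sqrt (p * (1 - p)) * (\<Sum>b\<in>{b. k \<in> b \<and> b \<subseteq> A}.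
                                  p ^ (card A - card b) / card b * (\<Prod>j\<in>b - {k}. Bk j S - p))"
    unfolding sum_distrib_left
  proof (intro sum.cong refl)
    fix b assume b: "b \<in> {b. k \<in> b \<and> b \<subseteq> A}"
    then have "finite b" "k \<in> b" using finite_subset[OF _ finA] by auto
    then have "card b = Suc (card (b - {k}))" by (rule card_Suc_Diff1[symmetric])
    then show "c b * YA p (b - {k}) S
             = sqrt (p * (1 - p)) * (p ^ (card A - card b) / card b * (\<Prod>j\<in>b - {k}. Bk j S - p))"
      unfolding c_def sqrt_pq_power_mult_YA[OF p, symmetric] by simp
  qed
  finally show ?thesis .
qed

theorem lemma5p1:
  fixes n :: nat and p :: real and A :: "nat set set" and k :: "nat set"
  assumes "0 < p" and "p < 1"
    and "A \<subseteq> edges n" and "k \<in> edges n"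
  shows "(\<forall>S\<subseteq>edges n.
            Dgrad p k (centered n p (BA A)) S
              = sqrt (p * (1 - p)) * (if k \<in> A then 1 else 0) * BA (A - {k}) S)
       \<and> (\<forall>S\<subseteq>edges n.
            - Dgrad p k (Linv n p (centered n p (BA A))) S
              = sqrt (p * (1 - p)) * (if k \<in> A then 1 else 0) *
                (\<Sum>\<alpha>\<in>{\<alpha>. k \<in> \<alpha> \<and> \<alpha> \<subseteq> A}.
                   p ^ (card A - card \<alpha>)
                   / (real (card A) * real ((card A - 1) choose (card \<alpha> - 1)))
                   * BA (\<alpha> - {k}) S))
       \<and> (\<forall>S\<subseteq>edges n.
            0 \<le> Dgrad p k (centered n p (BA A)) S
          \<and> 0 \<le> - Dgrad p k (Linv n p (centered n p (BA A))) S)"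
proof -
  have finA: "finite A"
    using assms(3) finite_edges finite_subset by auto
  have gradient: "Dgrad p k (centered n p (BA A)) S
      = sqrt (p * (1 - p)) * (if k \<in> A then 1 else 0) * BA (A - {k}) S" for S
    unfolding Dgrad_centered by (rule Dgrad_BA[OF finA])
  have gradient_Linv: "- Dgrad p k (Linv n p (centered n p (BA A))) S
      = sqrt (p * (1 - p)) * (if k \<in> A then 1 else 0) *
        (\<Sum>\<alpha>\<in>{\<alpha>. k \<in> \<alpha> \<and> \<alpha> \<subseteq> A}.
           p ^ (card A - card \<alpha>) / (real (card A) * real ((card A - 1) choose (card \<alpha> - 1)))
           * BA (\<alpha> - {k}) S)" for S
  proof (cases "k \<in> A")
    case True
    then show ?thesis
      using neg_Dgrad_Linv_centered_BA[OF assms(1-3)] sum_containing_shifted_prod[OF finA True]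
      by (simp add: BA_def)
  next
    case False
    then have no_subsets: "{b. k \<in> b \<and> b \<subseteq> A} = {}" by auto
    show ?thesis
      unfolding neg_Dgrad_Linv_centered_BA[OF assms(1-3)] no_subsets using False by simp
  qed
  have "0 \<le> Dgrad p k (centered n p (BA A)) S" "0 \<le> - Dgrad p k (Linv n p (centered n p (BA A))) S" for S
    unfolding gradient gradient_Linv using assms(1,2)
    by (auto intro!: mult_nonneg_nonneg sum_nonneg divide_nonneg_nonneg BA_nonneg)
  then show ?thesis
    using gradient gradient_Linv by blast
qed

end
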